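(* Let $\mathbf{M}=(c_{i,j})_{i,j\ge0}$ be a positive definite moment matrix, i.e. $c_{i,j}=\int z^i\bar z^j d\mu$ for some positive Borel measure $\mu$ on $\mathbb{C}$ with infinite support and finite moments, and let $\widehat{\mathbf{M}}=(c_{i+1,j+1})_{i,j\ge0}$ be the matrix obtained by removing the first row and first column of $\mathbf{M}$. Then $$\beta(\widehat{\mathbf{M}},\mathbf{M})=\lim_{n\to\infty} c_{n,n}^{1/n}.$$
   Context: For infinite Hermitian positive semidefinite matrices $\mathbf{A},\mathbf{B}$ with $\mathbf{B}$ positive definite, $\beta(\mathbf{A},\mathbf{B})=\sup\{v\mathbf{A}v^*/v\mathbf{B}v^*: v\in c_{00}\setminus\{0\}\}\in(-\infty,\infty]$, equivalently the limit as $n\to\infty$ of the largest generalized eigenvalue of the $(n+1)\times(n+1)$ truncation $\mathbf{A}_n$ with respect to $\mathbf{B}_n$; $c_{00}$ is the space of finitely supported complex row sequences. *)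

theory Defs
  imports "HOL-Analysis.Analysis"
begin

text \<open>Infinite matrices are functions nat => nat => complex, indexed from 0.\<close>

definition moment :: "complex measure \<Rightarrow> nat \<Rightarrow> nat \<Rightarrow> complex" where
  "moment \<mu> i j = integral\<^sup>L \<mu> (\<lambda>z. z ^ i * cnj z ^ j)"

definition shift_matrix :: "(nat \<Rightarrow> nat \<Rightarrow> complex) \<Rightarrow> nat \<Rightarrow> nat \<Rightarrow> complex" where
  "shift_matrix A i j = A (Suc i) (Suc j)"

definition c00 :: "(nat \<Rightarrow> complex) set" where
  "c00 = {v. finite {i. v i \<noteq> 0}}"

definition qform :: "(nat \<Rightarrow> nat \<Rightarrow> complex) \<Rightarrow> (nat \<Rightarrow> complex) \<Rightarrow> complex" where
  "qform A v = (\<Sum>i\<in>{i. v i \<noteq> 0}. \<Sum>j\<in>{j. v j \<noteq> 0}. v i * A i j * cnj (v j))"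

text \<open>beta(A,B) = sup { v A v^* / v B v^* : v in c00, v ~= 0 } in the extended reals
  (the forms are real for Hermitian matrices; we take real parts).\<close>
definition beta :: "(nat \<Rightarrow> nat \<Rightarrow> complex) \<Rightarrow> (nat \<Rightarrow> nat \<Rightarrow> complex) \<Rightarrow> ereal" where
  "beta A B = (SUP v \<in> c00 - {\<lambda>_. 0}. ereal (Re (qform A v) / Re (qform B v)))"

definition measure_support :: "complex measure \<Rightarrow> complex set" where
  "measure_support \<mu> = {z. \<forall>e>0. emeasure \<mu> (ball z e) > 0}"

end

theory Submission
  imports Defs "HOL-Real_Asymp.Real_Asymp"
begin

text \<open>
  Let c(n) = \<integral> |z|^(2n) d\<mu> be the diagonal moments and R = sup { |z|^2 : z \<in> supp \<mu> }.
  For v \<in> c00 with polynomial p(z) = \<Sum> v_i z^i one has v M v^* = \<integral> |p|^2 d\<mu> and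
  v M' v^* = \<integral> |z|^2 |p|^2 d\<mu>, where M' is the shifted matrix; since \<mu> is concentrated on
  its support this gives \<beta> \<le> R. Testing with unit vectors gives c(n+1) \<le> \<beta> c(n), hence
  c(n) \<le> c(0) \<beta>^n and limsup c(n)^(1/n) \<le> \<beta>. Conversely, for t < |z0|^2 with z0 in the
  support, some ball around z0 of positive mass m lies in {|z|^2 > t}, so c(n) \<ge> m t^n
  and liminf c(n)^(1/n) \<ge> R. Thus R \<le> liminf \<le> limsup \<le> \<beta> \<le> R.
\<close>

lemma powr_inverse_nat_tendsto_1:
  "m > 0 \<Longrightarrow> (\<lambda>n. (m::real) powr (1 / real n)) \<longlonglongrightarrow> 1"
  by real_asymp

lemma powr_inverse_mult_power:
  fixes m t :: real
  assumes "m \<ge> 0" "t \<ge> 0" "n > 0"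
  shows "(m * t ^ n) powr (1 / real n) = m powr (1 / real n) * t"
proof -
  have "(t ^ n) powr (1 / real n) = t"
    using assms by (cases "t = 0") (simp_all add: powr_realpow[symmetric] powr_powr)
  then show ?thesis using assms by (simp add: powr_mult)
qed

lemma Liminf_root_ge_of_geometric_lower_bound:
  fixes a :: "nat \<Rightarrow> real"
  assumes "m > 0" "t \<ge> 0" "\<And>n. m * t ^ n \<le> a n"
  shows "ereal t \<le> Liminf sequentially (\<lambda>n. ereal (a n powr (1 / real n)))"
proof -
  have "(\<lambda>n. ereal (m powr (1 / real n) * t)) \<longlonglongrightarrow> ereal (1 * t)"
    by (intro tendsto_ereal tendsto_mult tendsto_const powr_inverse_nat_tendsto_1 assms)
  then have "Liminf sequentially (\<lambda>n. ereal (m powr (1 / real n) * t)) = ereal t"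
    by (simp add: lim_imp_Liminf)
  moreover have "eventually (\<lambda>n. ereal (m powr (1 / real n) * t) \<le> ereal (a n powr (1 / real n)))
      sequentially"
    using eventually_gt_at_top[of 0]
  proof eventually_elim
    case (elim n)
    have "m powr (1 / real n) * t = (m * t ^ n) powr (1 / real n)"
      using elim assms by (simp add: powr_inverse_mult_power)
    also have "\<dots> \<le> a n powr (1 / real n)"
      using assms by (intro powr_mono2) auto
    finally show ?case by simp
  qed
  ultimately show ?thesis by (metis Liminf_mono)
qed

lemma Limsup_root_le_of_ratio_bound:
  fixes a :: "nat \<Rightarrow> real"
  assumes "a 0 > 0" "\<And>n. a n \<ge> 0" "\<And>n. a (Suc n) \<le> b * a n"
  shows "Limsup sequentially (\<lambda>n. ereal (a n powr (1 / real n))) \<le> ereal b"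
proof -
  have "0 \<le> b * a 0"
    using assms(2)[of 1] assms(3)[of 0] by simp
  then have "b \<ge> 0"
    using assms(1) by (simp add: zero_le_mult_iff)
  have geometric: "a n \<le> a 0 * b ^ n" for n
  proof (induction n)
    case (Suc n)
    have "a (Suc n) \<le> b * a n" by (rule assms(3))
    also have "\<dots> \<le> b * (a 0 * b ^ n)" using Suc \<open>b \<ge> 0\<close> by (intro mult_left_mono)
    finally show ?case by (simp add: algebra_simps)
  qed simp
  have "(\<lambda>n. ereal (a 0 powr (1 / real n) * b)) \<longlonglongrightarrow> ereal (1 * b)"
    by (intro tendsto_ereal tendsto_mult tendsto_const powr_inverse_nat_tendsto_1 assms)
  then have "Limsup sequentially (\<lambda>n. ereal (a 0 powr (1 / real n) * b)) = ereal b"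
    by (simp add: lim_imp_Limsup)
  moreover have "eventually (\<lambda>n. ereal (a n powr (1 / real n)) \<le> ereal (a 0 powr (1 / real n) * b))
      sequentially"
    using eventually_gt_at_top[of 0]
  proof eventually_elim
    case (elim n)
    have "a n powr (1 / real n) \<le> (a 0 * b ^ n) powr (1 / real n)"
      using geometric[of n] assms(2) by (intro powr_mono2) auto
    also have "\<dots> = a 0 powr (1 / real n) * b"
      using elim assms(1) \<open>b \<ge> 0\<close> by (simp add: powr_inverse_mult_power)
    finally show ?case by simp
  qed
  ultimately show ?thesis by (metis Limsup_mono)
qed

lemma AE_in_measure_support:
  fixes \<mu> :: "complex measure"
  assumes "sets \<mu> = sets borel"
  shows "AE z in \<mu>. z \<in> measure_support \<mu>"
proof -
  define F where "F = {ball z e | z e. 0 < e \<and> emeasure \<mu> (ball z e) = 0}"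
  obtain F' where F': "F' \<subseteq> F" "countable F'" "\<Union>F' = \<Union>F"
    by (rule Lindelof[of F]) (auto simp: F_def)
  have "AE z in \<mu>. \<forall>B\<in>F'. z \<notin> B"
  proof (rule AE_ball_countable'[OF _ F'(2)])
    fix B assume "B \<in> F'"
    then obtain z e where "B = ball z e" "emeasure \<mu> B = 0"
      using F'(1) by (auto simp: F_def)
    moreover have "ball z e \<in> sets \<mu>"
      using assms by simp
    ultimately have "B \<in> sets \<mu>" "emeasure \<mu> B = 0"
      by auto
    then show "AE z in \<mu>. z \<notin> B"
      by (intro AE_I'[of B]) (auto intro: null_setsI)
  qed
  then show ?thesis
  proof (rule eventually_mono)
    fix z assume z: "\<forall>B\<in>F'. z \<notin> B"
    show "z \<in> measure_support \<mu>"
    proof (rule ccontr)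
      assume "z \<notin> measure_support \<mu>"
      then obtain e where "e > 0" "\<not> emeasure \<mu> (ball z e) > 0"
        unfolding measure_support_def by auto
      then have "ball z e \<in> F"
        unfolding F_def by (auto simp: zero_less_iff_neq_zero)
      moreover have "z \<in> ball z e"
        using \<open>e > 0\<close> by simp
      ultimately show False
        using z F'(3) by blast
    qed
  qed
qed

lemma measure_support_subset_closed:
  fixes \<mu> :: "complex measure"
  assumes "sets \<mu> = sets borel" "closed C" "AE z in \<mu>. z \<in> C"
  shows "measure_support \<mu> \<subseteq> C"
proof
  fix z0 assume z0: "z0 \<in> measure_support \<mu>"
  show "z0 \<in> C"
  proof (rule ccontr)
    assume "z0 \<notin> C"
    then obtain e where e: "e > 0" "ball z0 e \<subseteq> - C"
      using assms(2) open_contains_ball[of "- C"] by blast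
    have "AE z in \<mu>. z \<notin> ball z0 e"
      using assms(3) by (rule eventually_mono) (use e(2) in auto)
    then have "emeasure \<mu> (ball z0 e) = 0"
      using assms(1) sets_eq_imp_space_eq[OF assms(1)]
      by (subst (asm) AE_iff_measurable[of "ball z0 e"]) auto
    then show False
      using z0 e(1) unfolding measure_support_def by auto
  qed
qed

lemma moment_diag: "moment \<mu> n n = of_real (\<integral>z. norm z ^ (2 * n) \<partial>\<mu>)"
proof -
  have "z ^ n * cnj z ^ n = of_real (norm z ^ (2 * n))" for z :: complex
    by (metis complex_norm_square power_mult power_mult_distrib complex_cnj_power
        mult.commute of_real_power)
  then show ?thesis
    unfolding moment_def by (simp only: integral_complex_of_real)
qed

lemma Re_moment_diag: "Re (moment \<mu> n n) = (\<integral>z. norm z ^ (2 * n) \<partial>\<mu>)"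
  by (simp add: moment_diag)

lemma diag_ratio_le_beta_shift:
  "ereal (Re (A (Suc n) (Suc n)) / Re (A n n)) \<le> beta (shift_matrix A) A"
proof -
  define v where "v i = (if i = n then 1 else (0::complex))" for i
  have supp: "{i. v i \<noteq> 0} = {n}"
    by (auto simp: v_def)
  have "v \<in> c00 - {\<lambda>_. 0}"
    unfolding c00_def using supp by (auto simp: fun_eq_iff v_def)
  then have "ereal (Re (qform (shift_matrix A) v) / Re (qform A v)) \<le> beta (shift_matrix A) A"
    unfolding beta_def by (rule SUP_upper)
  moreover have "qform B v = B n n" for B
    unfolding qform_def supp by (simp add: v_def)
  ultimately show ?thesis
    by (simp add: shift_matrix_def)
qed

definition c00_poly :: "(nat \<Rightarrow> complex) \<Rightarrow> complex \<Rightarrow> complex" where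
  "c00_poly v z = (\<Sum>i\<in>{i. v i \<noteq> 0}. v i * z ^ i)"

locale moment_measure =
  fixes \<mu> :: "complex measure"
  assumes sets_eq_borel: "sets \<mu> = sets borel"
    and integrable_monomial: "\<And>i j. integrable \<mu> (\<lambda>z. z ^ i * cnj z ^ j)"
begin

sublocale finite_measure \<mu>
proof
  have "integrable \<mu> (\<lambda>z. 1::complex)"
    using integrable_monomial[of 0 0] by simp
  then show "emeasure \<mu> (space \<mu>) \<noteq> \<infinity>"
    by (simp add: integrable_iff_bounded)
qed

lemma integrable_norm_power: "integrable \<mu> (\<lambda>z. norm z ^ (2 * n))"
proof -
  have "Re (z ^ n * cnj z ^ n) = norm z ^ (2 * n)" for z :: complex
    by (metis Re_complex_of_real complex_norm_square power_mult power_mult_distrib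
        complex_cnj_power mult.commute of_real_power)
  then show ?thesis
    using integrable_Re[OF integrable_monomial[of n n]] by simp
qed

lemma qform_shifted_moment:
  fixes k :: nat and v :: "nat \<Rightarrow> complex"
  defines "h \<equiv> \<lambda>z. norm z ^ (2 * k) * (norm (c00_poly v z))\<^sup>2"
  shows "qform (\<lambda>i j. moment \<mu> (i + k) (j + k)) v = of_real (integral\<^sup>L \<mu> h)"
    and "integrable \<mu> h"
proof -
  define I where "I = {i. v i \<noteq> 0}"
  define g where
    "g = (\<lambda>z::complex. \<Sum>i\<in>I. \<Sum>j\<in>I. v i * (z ^ (i + k) * cnj z ^ (j + k)) * cnj (v j))"
  have g_eq: "g z = of_real (h z)" for z
  proof -
    define p where "p = z ^ k * c00_poly v z"
    have p_eq: "p = (\<Sum>i\<in>I. v i * z ^ (i + k))"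
      unfolding p_def c00_poly_def I_def
      by (simp add: sum_distrib_left power_add algebra_simps)
    have "g z = (\<Sum>i\<in>I. v i * z ^ (i + k)) * (\<Sum>j\<in>I. cnj (v j) * cnj z ^ (j + k))"
      unfolding g_def sum_product by (intro sum.cong refl) (simp add: algebra_simps)
    also have "\<dots> = p * cnj p"
      unfolding p_eq cnj_sum complex_cnj_mult complex_cnj_power ..
    also have "\<dots> = of_real ((norm p)\<^sup>2)"
      by (metis complex_norm_square)
    also have "(norm p)\<^sup>2 = h z"
      unfolding p_def h_def
      by (simp add: norm_mult norm_power power_mult_distrib power_mult[symmetric] mult.commute)
    finally show ?thesis .
  qed
  have "integral\<^sup>L \<mu> g = (\<Sum>i\<in>I. \<Sum>j\<in>I. integral\<^sup>L \<mu>
      (\<lambda>z. v i * (z ^ (i + k) * cnj z ^ (j + k)) * cnj (v j)))"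
    unfolding g_def using integrable_monomial by simp
  then have "qform (\<lambda>i j. moment \<mu> (i + k) (j + k)) v = integral\<^sup>L \<mu> g"
    unfolding qform_def moment_def I_def by simp
  also have "\<dots> = of_real (integral\<^sup>L \<mu> h)"
    unfolding g_eq by (rule integral_complex_of_real)
  finally show "qform (\<lambda>i j. moment \<mu> (i + k) (j + k)) v = of_real (integral\<^sup>L \<mu> h)" .
  have "integrable \<mu> g"
    unfolding g_def using integrable_monomial by simp
  then show "integrable \<mu> h"
    using integrable_Re[of \<mu> g] unfolding g_eq by simp
qed

lemma Re_qform_moment:
  "Re (qform (moment \<mu>) v) = (\<integral>z. (norm (c00_poly v z))\<^sup>2 \<partial>\<mu>)"
  using qform_shifted_moment(1)[of 0 v] by simp

lemma Re_qform_shift_moment: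
  "Re (qform (shift_matrix (moment \<mu>)) v) = (\<integral>z. (norm z)\<^sup>2 * (norm (c00_poly v z))\<^sup>2 \<partial>\<mu>)"
proof -
  have "shift_matrix (moment \<mu>) = (\<lambda>i j. moment \<mu> (i + 1) (j + 1))"
    by (simp add: shift_matrix_def fun_eq_iff)
  then show ?thesis
    using qform_shifted_moment(1)[of 1 v] by simp
qed

lemma diag_moment_pos:
  assumes "infinite (measure_support \<mu>)"
  shows "Re (moment \<mu> n n) > 0"
proof (rule ccontr)
  assume "\<not> Re (moment \<mu> n n) > 0"
  moreover have "(\<integral>z. norm z ^ (2 * n) \<partial>\<mu>) \<ge> 0"
    by (rule integral_nonneg_AE) simp
  ultimately have "(\<integral>z. norm z ^ (2 * n) \<partial>\<mu>) = 0"
    by (simp add: Re_moment_diag)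
  then have "AE z in \<mu>. norm z ^ (2 * n) = 0"
    by (subst (asm) integral_nonneg_eq_0_iff_AE) (auto intro: integrable_norm_power)
  then have "AE z in \<mu>. z \<in> {0}"
    by (rule eventually_mono) (auto simp: power_eq_0_iff)
  then have "measure_support \<mu> \<subseteq> {0}"
    by (intro measure_support_subset_closed sets_eq_borel) auto
  then show False
    using assms finite_subset by blast
qed

lemma beta_le_SUP_support:
  assumes "measure_support \<mu> \<noteq> {}"
  shows "beta (shift_matrix (moment \<mu>)) (moment \<mu>) \<le> (SUP z\<in>measure_support \<mu>. ereal ((norm z)\<^sup>2))"
    (is "_ \<le> ?R")
proof -
  obtain z where "z \<in> measure_support \<mu>"
    using assms by blast
  then have "ereal ((norm z)\<^sup>2) \<le> ?R"
    by (rule SUP_upper)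
  then have R_nonneg: "0 \<le> ?R"
    by (rule order_trans[rotated]) simp
  show ?thesis
    unfolding beta_def
  proof (rule SUP_least)
    fix v assume "v \<in> c00 - {\<lambda>_. 0}"
    define P where "P = (\<lambda>z. (norm (c00_poly v z))\<^sup>2)"
    have int_P: "integrable \<mu> P" "integrable \<mu> (\<lambda>z. (norm z)\<^sup>2 * P z)"
      using qform_shifted_moment(2)[of 0 v] qform_shifted_moment(2)[of 1 v] by (simp_all add: P_def)
    have P_nonneg: "(\<integral>z. P z \<partial>\<mu>) \<ge> 0"
      by (rule integral_nonneg_AE) (simp add: P_def)
    have "ereal ((\<integral>z. (norm z)\<^sup>2 * P z \<partial>\<mu>) / (\<integral>z. P z \<partial>\<mu>)) \<le> ?R"
    proof (cases ?R)
      case (real r)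
      have "AE z in \<mu>. (norm z)\<^sup>2 \<le> r"
        using AE_in_measure_support[OF sets_eq_borel]
        by (rule eventually_mono) (metis SUP_upper ereal_less_eq(3) real)
      then have "(\<integral>z. (norm z)\<^sup>2 * P z \<partial>\<mu>) \<le> (\<integral>z. r * P z \<partial>\<mu>)"
        using int_P by (intro integral_mono_AE)
          (auto elim!: eventually_mono intro: mult_right_mono simp: P_def)
      then have "(\<integral>z. (norm z)\<^sup>2 * P z \<partial>\<mu>) \<le> r * (\<integral>z. P z \<partial>\<mu>)"
        by simp
      then show ?thesis
        using P_nonneg R_nonneg real
        by (cases "(\<integral>z. P z \<partial>\<mu>) = 0") (auto simp: divide_le_eq mult.commute)
    qed (use R_nonneg in auto)
    then show "ereal (Re (qform (shift_matrix (moment \<mu>)) v) / Re (qform (moment \<mu>) v)) \<le> ?R"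
      by (simp add: Re_qform_moment Re_qform_shift_moment P_def)
  qed
qed

lemma diag_moment_ge_geometric:
  assumes "z0 \<in> measure_support \<mu>" "0 \<le> t" "t < (norm z0)\<^sup>2"
  obtains m where "m > 0" "\<And>n. m * t ^ n \<le> Re (moment \<mu> n n)"
proof -
  have "open {w::complex. t < (norm w)\<^sup>2}"
    by (intro open_Collect_less continuous_intros)
  then obtain d where "d > 0" and ball: "ball z0 d \<subseteq> {w. t < (norm w)\<^sup>2}"
    using assms(3) by (meson mem_Collect_eq open_contains_ball_eq)
  define B where "B = ball z0 d"
  have B_sets: "B \<in> sets \<mu>"
    unfolding B_def using sets_eq_borel by simp
  have "emeasure \<mu> B > 0"
    using assms(1) \<open>d > 0\<close> unfolding B_def measure_support_def by auto
  then have "measure \<mu> B > 0"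
    by (simp add: emeasure_eq_measure zero_less_measure_iff)
  moreover have "measure \<mu> B * t ^ n \<le> Re (moment \<mu> n n)" for n
  proof -
    have "(\<integral>z. indicator B z * t ^ n \<partial>\<mu>) \<le> (\<integral>z. norm z ^ (2 * n) \<partial>\<mu>)"
    proof (rule integral_mono[OF _ integrable_norm_power])
      show "integrable \<mu> (\<lambda>z. indicator B z * t ^ n)"
        using B_sets
        by (intro integrable_mult_left integrable_real_indicator) (auto simp: less_top[symmetric])
      fix z
      have "t ^ n \<le> ((norm z)\<^sup>2) ^ n" if "z \<in> B"
        using that ball assms(2) unfolding B_def by (intro power_mono) auto
      then show "indicator B z * t ^ n \<le> norm z ^ (2 * n)"
        by (cases "z \<in> B") (simp_all add: power_mult)
    qed
    then show ?thesis
      using B_sets by (simp add: Re_moment_diag)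
  qed
  ultimately show ?thesis
    using that by blast
qed

lemma SUP_support_le_Liminf_root:
  "(SUP z\<in>measure_support \<mu>. ereal ((norm z)\<^sup>2))
     \<le> Liminf sequentially (\<lambda>n. ereal (Re (moment \<mu> n n) powr (1 / real n)))"
    (is "_ \<le> ?lim")
proof (rule SUP_least, rule dense_le)
  fix z0 x
  assume z0: "z0 \<in> measure_support \<mu>" and x: "x < ereal ((norm z0)\<^sup>2)"
  show "x \<le> ?lim"
  proof (cases "x \<le> 0")
    case True
    have "0 \<le> ?lim"
      by (intro Liminf_bounded always_eventually) simp
    with True show ?thesis by simp
  next
    case False
    then obtain t where t: "x = ereal t" "0 \<le> t" "t < (norm z0)\<^sup>2"
      using x by (cases x) auto
    obtain m where "m > 0" and bound: "\<And>n. m * t ^ n \<le> Re (moment \<mu> n n)"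
      using diag_moment_ge_geometric[OF z0 t(2,3)] by blast
    show ?thesis
      unfolding t(1) using \<open>m > 0\<close> t(2) bound by (rule Liminf_root_ge_of_geometric_lower_bound)
  qed
qed

lemma Limsup_root_le_beta:
  assumes "infinite (measure_support \<mu>)"
  shows "Limsup sequentially (\<lambda>n. ereal (Re (moment \<mu> n n) powr (1 / real n)))
           \<le> beta (shift_matrix (moment \<mu>)) (moment \<mu>)"
    (is "_ \<le> ?\<beta>")
proof (cases ?\<beta>)
  case (real b)
  have "Re (moment \<mu> (Suc n) (Suc n)) \<le> b * Re (moment \<mu> n n)" for n
    using diag_ratio_le_beta_shift[of "moment \<mu>" n] diag_moment_pos[OF assms, of n] real
    by (simp add: pos_divide_le_eq)
  moreover have "Re (moment \<mu> n n) \<ge> 0" for n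
    using diag_moment_pos[OF assms] less_imp_le by blast
  ultimately show ?thesis
    unfolding real by (intro Limsup_root_le_of_ratio_bound diag_moment_pos assms)
next
  case MInf
  then show ?thesis
    using diag_ratio_le_beta_shift[of "moment \<mu>" 0] by simp
qed simp

end

theorem corollary5:
  fixes \<mu> :: "complex measure"
  assumes "sets \<mu> = sets borel"
    and "infinite (measure_support \<mu>)"
    and "\<And>i j. integrable \<mu> (\<lambda>z. z ^ i * cnj z ^ j)"
  shows "(\<lambda>n. ereal (Re (moment \<mu> n n) powr (1 / real n)))
           \<longlonglongrightarrow> beta (shift_matrix (moment \<mu>)) (moment \<mu>)"
proof -
  interpret moment_measure \<mu>
    using assms(1,3) by unfold_locales
  define f where "f n = ereal (Re (moment \<mu> n n) powr (1 / real n))" for n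
  define \<beta> where "\<beta> = beta (shift_matrix (moment \<mu>)) (moment \<mu>)"
  have "measure_support \<mu> \<noteq> {}"
    using assms(2) by auto
  then have "\<beta> \<le> Liminf sequentially f"
    unfolding f_def \<beta>_def using SUP_support_le_Liminf_root by (rule order_trans[OF beta_le_SUP_support])
  moreover have "Limsup sequentially f \<le> \<beta>"
    unfolding f_def \<beta>_def using assms(2) by (rule Limsup_root_le_beta)
  moreover have "Liminf sequentially f \<le> Limsup sequentially f"
    by (rule Liminf_le_Limsup) simp
  ultimately have "f \<longlonglongrightarrow> \<beta>"
    by (intro Liminf_eq_Limsup) auto
  then show ?thesis
    unfolding f_def \<beta>_def .
qed

end
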